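(* Let $n\ge 2$, $d\ge 1$, and let $(p;v)$ be the canonical pair of a line $\ell$ in $[n]^d$ of odd weight. Then $\sigma(p)\equiv\sigma(p+(i-1)v)\pmod 2$ for every integer $1\le i\le\lfloor n/2\rfloor$, and $\sigma(p)\not\equiv\sigma(p+(i-1)v)\pmod 2$ for every integer $\lceil n/2\rceil< i\le n$.
   Context: Let $[n]=\{1,\dots,n\}$. For $p\in[n]^d$ and $v\in\{-1,0,1\}^d$ with $v\ne\vec 0$, if $p+tv\in[n]^d$ for all $0\le t\le n-1$, the set $\ell=\{p,p+v,\dots,p+(n-1)v\}$ is a line with initial point $p$ and direction $v$. The canonical pair of a line is its unique representation $(p;v)$ in which the first nonzero coordinate of $v$ equals $+1$; the weight of the line is the number of nonzero coordinates of this $v$. For $p\in[n]^d$ and $i\in[n]$ let $\pi_i(p)=|\{j\in[d]:p_j=i\}|$, and let $\sigma(p)=\sum_{1\le i\le n/2}\pi_i(p)$. *)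

theory Defs
  imports Complex_Main "HOL-Number_Theory.Cong"
begin

text \<open>Points of [n]^d and directions are represented as functions nat => int;
  only the coordinates j in {1..d} are meaningful.\<close>

definition in_grid :: "nat \<Rightarrow> nat \<Rightarrow> (nat \<Rightarrow> int) \<Rightarrow> bool" where
  "in_grid n d p \<longleftrightarrow> (\<forall>j\<in>{1..d}. 1 \<le> p j \<and> p j \<le> int n)"

definition shift :: "(nat \<Rightarrow> int) \<Rightarrow> int \<Rightarrow> (nat \<Rightarrow> int) \<Rightarrow> (nat \<Rightarrow> int)" where
  "shift p t v = (\<lambda>j. p j + t * v j)"

definition is_direction :: "nat \<Rightarrow> (nat \<Rightarrow> int) \<Rightarrow> bool" where
  "is_direction d v \<longleftrightarrow> (\<forall>j\<in>{1..d}. v j \<in> {-1, 0, 1}) \<and> (\<exists>j\<in>{1..d}. v j \<noteq> 0)"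

definition is_line :: "nat \<Rightarrow> nat \<Rightarrow> (nat \<Rightarrow> int) \<Rightarrow> (nat \<Rightarrow> int) \<Rightarrow> bool" where
  "is_line n d p v \<longleftrightarrow> in_grid n d p \<and> is_direction d v \<and>
     (\<forall>t::nat. t \<le> n - 1 \<longrightarrow> in_grid n d (shift p (int t) v))"

definition canonical_dir :: "nat \<Rightarrow> (nat \<Rightarrow> int) \<Rightarrow> bool" where
  "canonical_dir d v \<longleftrightarrow> (\<exists>k\<in>{1..d}. v k = 1 \<and> (\<forall>j\<in>{1..d}. j < k \<longrightarrow> v j = 0))"

definition weight :: "nat \<Rightarrow> (nat \<Rightarrow> int) \<Rightarrow> nat" where
  "weight d v = card {j\<in>{1..d}. v j \<noteq> 0}"

definition pi_count :: "nat \<Rightarrow> nat \<Rightarrow> (nat \<Rightarrow> int) \<Rightarrow> nat" where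
  "pi_count d i p = card {j\<in>{1..d}. p j = int i}"

definition sigma :: "nat \<Rightarrow> nat \<Rightarrow> (nat \<Rightarrow> int) \<Rightarrow> nat" where
  "sigma n d p = (\<Sum>i\<in>{i::nat. 1 \<le> i \<and> real i \<le> real n / 2}. pi_count d i p)"

end

theory Submission
  imports Defs
begin

(* Write L(q) for the set of coordinates j with 1 <= q_j <= n/2, so that sigma(q) = |L(q)|.
   Along a line, an inactive coordinate (v_j = 0) is constant, while an active one runs
   monotonically from one end of [n] to the other.  An active coordinate therefore lies in the
   lower half at p + (i-1)v iff it does so at p when i <= n/2, and iff it does not when
   i > ceil(n/2).  So L(p + (i-1)v) = L(p) in the first case; in the second the two sets differ
   exactly in the weight(v) active coordinates, and |A| + |B| has the parity of the size of
   the symmetric difference of A and B.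
   Neither the canonical form of (p;v) nor d >= 1 is needed, and n >= 2 is implied by
   the existence of such an i. *)

definition lower_half :: "nat \<Rightarrow> int \<Rightarrow> bool" where
  "lower_half n x \<longleftrightarrow> 1 \<le> x \<and> 2 * x \<le> int n"

definition lower_coords :: "nat \<Rightarrow> nat \<Rightarrow> (nat \<Rightarrow> int) \<Rightarrow> nat set" where
  "lower_coords n d q = {j\<in>{1..d}. lower_half n (q j)}"

lemma card_add_card_eq_card_sym_diff:
  assumes "finite A" and "finite B"
  shows "card A + card B = card (sym_diff A B) + 2 * card (A \<inter> B)"
proof -
  have "A \<union> B = sym_diff A B \<union> (A \<inter> B)" and "sym_diff A B \<inter> (A \<inter> B) = {}"
    by blast+
  then have "card (A \<union> B) = card (sym_diff A B) + card (A \<inter> B)"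
    using assms by (simp add: card_Un_disjoint)
  then show ?thesis
    using card_Un_Int[OF assms] by simp
qed

lemma sigma_eq_card_lower_coords: "sigma n d q = card (lower_coords n d q)"
proof -
  define I where "I = {i::nat. 1 \<le> i \<and> real i \<le> real n / 2}"
  have "finite I"
    unfolding I_def by (rule finite_subset[of _ "{..n}"]) auto
  have "lower_coords n d q = (\<Union>i\<in>I. {j\<in>{1..d}. q j = int i})"
  proof (intro equalityI subsetI)
    fix j assume "j \<in> lower_coords n d q"
    then have "j \<in> {1..d}" and "nat (q j) \<in> I" and "q j = int (nat (q j))"
      unfolding lower_coords_def lower_half_def I_def by auto
    then show "j \<in> (\<Union>i\<in>I. {j\<in>{1..d}. q j = int i})"
      by blast
  qed (auto simp: lower_coords_def lower_half_def I_def)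
  also have "card \<dots> = (\<Sum>i\<in>I. card {j\<in>{1..d}. q j = int i})"
    using \<open>finite I\<close> by (intro card_UN_disjoint) auto
  finally show ?thesis
    unfolding sigma_def pi_count_def I_def by simp
qed

lemma line_direction_coord:
  assumes "is_line n d p v" and "j \<in> {1..d}"
  shows "v j \<in> {-1, 0, 1}"
  using assms unfolding is_line_def is_direction_def by blast

lemma line_start_coord:
  assumes "is_line n d p v" and "2 \<le> n" and "j \<in> {1..d}"
  shows "v j = 1 \<Longrightarrow> p j = 1" and "v j = -1 \<Longrightarrow> p j = int n"
proof -
  have "1 \<le> p j" "p j \<le> int n" "1 \<le> p j + int (n - 1) * v j" "p j + int (n - 1) * v j \<le> int n"
    using assms(1,3) unfolding is_line_def in_grid_def shift_def by (blast, blast, force+)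
  then show "v j = 1 \<Longrightarrow> p j = 1" and "v j = -1 \<Longrightarrow> p j = int n"
    using assms(2) by auto
qed

lemma lower_coords_early_on_line:
  assumes "is_line n d p v" and "1 \<le> i" and "2 * i \<le> n"
  shows "lower_coords n d (shift p (int i - 1) v) = lower_coords n d p"
proof -
  have "lower_half n (p j + (int i - 1) * v j) \<longleftrightarrow> lower_half n (p j)" if "j \<in> {1..d}" for j
    using line_direction_coord[OF assms(1) that] line_start_coord[OF assms(1) _ that] assms(2,3)
    unfolding lower_half_def by auto
  then show ?thesis
    unfolding lower_coords_def shift_def by auto
qed

lemma lower_coords_late_on_line:
  assumes "is_line n d p v" and "n + 2 \<le> 2 * i" and "i \<le> n"
  shows "sym_diff (lower_coords n d p) (lower_coords n d (shift p (int i - 1) v))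
           = {j\<in>{1..d}. v j \<noteq> 0}"
proof -
  have "lower_half n (p j + (int i - 1) * v j) \<longleftrightarrow>
          (if v j = 0 then lower_half n (p j) else \<not> lower_half n (p j))" if "j \<in> {1..d}" for j
    using line_direction_coord[OF assms(1) that] line_start_coord[OF assms(1) _ that] assms(2,3)
    unfolding lower_half_def by auto
  then show ?thesis
    unfolding lower_coords_def shift_def by auto
qed

theorem lemma19:
  fixes n d :: nat and p v :: "nat \<Rightarrow> int"
  assumes "n \<ge> 2" and "d \<ge> 1"
    and "is_line n d p v" and "canonical_dir d v"
    and "odd (weight d v)"
  shows "(\<forall>i::nat. 1 \<le> i \<and> real i \<le> real n / 2 \<longrightarrow>
            [sigma n d p = sigma n d (shift p (int i - 1) v)] (mod 2))
       \<and> (\<forall>i::nat. real_of_int \<lceil>real n / 2\<rceil> < real i \<and> i \<le> n \<longrightarrow>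
            \<not> [sigma n d p = sigma n d (shift p (int i - 1) v)] (mod 2))"
proof (intro conjI allI impI)
  fix i :: nat
  assume "1 \<le> i \<and> real i \<le> real n / 2"
  then have "1 \<le> i" and "2 * i \<le> n"
    by linarith+
  then show "[sigma n d p = sigma n d (shift p (int i - 1) v)] (mod 2)"
    using lower_coords_early_on_line[OF assms(3)] by (simp add: sigma_eq_card_lower_coords)
next
  fix i :: nat
  assume i: "real_of_int \<lceil>real n / 2\<rceil> < real i \<and> i \<le> n"
  then have "\<lceil>real n / 2\<rceil> + 1 \<le> int i"
    by linarith
  then have "n + 2 \<le> 2 * i"
    using le_of_int_ceiling[of "real n / 2"] by linarith
  let ?A = "lower_coords n d p" and ?B = "lower_coords n d (shift p (int i - 1) v)"
  have "card ?A + card ?B = weight d v + 2 * card (?A \<inter> ?B)"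
    using card_add_card_eq_card_sym_diff[of ?A ?B] lower_coords_late_on_line[OF assms(3)]
      \<open>n + 2 \<le> 2 * i\<close> i
    by (simp add: lower_coords_def weight_def)
  then have "odd (card ?A + card ?B)"
    using assms(5) by simp
  then show "\<not> [sigma n d p = sigma n d (shift p (int i - 1) v)] (mod 2)"
    by (simp add: sigma_eq_card_lower_coords cong_def) (metis odd_iff_mod_2_eq_one even_iff_mod_2_eq_zero)
qed

end
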